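(* Let $G$ be a cubic graph, let $H$ be a hexagon graph of $G$, and let $W$ be the set of white edges of $H$. For every blue perfect matching $M$ of $H$, the set $M\cup W$ ($=M\,\Delta\, W$) is a disjoint union of cycles, and there is an embedding of $G$ on a closed orientable surface whose set of face boundaries is exactly the set of subgraphs of $G$ induced by the cycles of $M\Delta W$. Here the subgraph of $G$ induced by a cycle $C$ of $M\Delta W$ is the subgraph with edge set $\{uv\in E(G): e_{uv}\in C \text{ or } \bar e_{uv}\in C\}$. Conversely, every embedding of $G$ on a closed orientable surface (equivalently, every rotation system of $G$) arises in this way from some blue perfect matching of $H$.
   Context: Hexagon graph. A hexagon is a copy of $K_{3,3}$. Let $G=(V,E)$ be a cubic graph. A hexagon graph $H$ of $G$ is built as follows. (1) Replace each $v\in V$ by a hexagon $h_v$ on vertex set $\{v_i: i\in\mathbb{Z}_6\}$ with edge set $\{v_iv_{i+1}, v_iv_{i+3}: i\in\mathbb{Z}_6\}$, the hexagons being pairwise vertex-disjoint. (2) For each $v$ with $N_G(v)=\{u,w,z\}$, assign to the neighbours pairwise distinct indices $i_{v(u)},i_{v(w)},i_{v(z)}\in\{0,1,2\}\subset\mathbb{Z}_6$. (3) Let $X=\bigcup_v\{v_{2i}\}$ and $Y=\bigcup_v\{v_{2i+1}\}$. Replace each edge $uv\in E$ by two disjoint edges $e_{uv},\bar e_{uv}$: if $v_{i_{v(u)}}$ and $u_{i_{u(v)}}$ both lie in $X$ or both lie in $Y$, put $e_{uv}=v_{i_{v(u)}}u_{i_{u(v)}+3}$, $\bar e_{uv}=v_{i_{v(u)}+3}u_{i_{u(v)}}$;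 otherwise $e_{uv}=v_{i_{v(u)}}u_{i_{u(v)}}$, $\bar e_{uv}=v_{i_{v(u)}+3}u_{i_{u(v)}+3}$. The edges $v_iv_{i+3}$ are red, the edges $v_iv_{i+1}$ are blue, and the edges $e_{uv},\bar e_{uv}$ are white. A blue perfect matching of $H$ is a perfect matching consisting only of blue edges. Rotation system. A rotation system of a graph $G$ is a collection $\{\pi_v: v\in V(G)\}$ where $\pi_v$ is a cyclic permutation of the edges incident with $v$; it determines an embedding of $G$ on a closed orientable surface whose face boundaries are the closed walks $e_1e_2\cdots e_k$ with $e_i=v^iv^{i+1}$, $\pi_{v^{i+1}}(e_i)=e_{i+1}$, $e_{k+1}=e_1$, $k$ minimal. *)

theory Defs
  imports Main
begin

definition nbrs :: "'a set set \<Rightarrow> 'a \<Rightarrow> 'a set" where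
  "nbrs E v = {u. {u, v} \<in> E}"

definition cubic_graph :: "'a set \<Rightarrow> 'a set set \<Rightarrow> bool" where
  "cubic_graph V E \<longleftrightarrow> finite V
     \<and> (\<forall>e\<in>E. \<exists>u v. e = {u, v} \<and> u \<noteq> v \<and> u \<in> V \<and> v \<in> V)
     \<and> (\<forall>v\<in>V. card (nbrs E v) = 3)"

text \<open>Vertex v_i of the hexagon h_v is the pair (v, i) with i in {0..5} representing Z_6.
  The index assignment i_{v(u)} is idx v u; for each v it must map the three neighbours
  of v bijectively onto {0,1,2}.\<close>
definition hexagon_labelling :: "'a set \<Rightarrow> 'a set set \<Rightarrow> ('a \<Rightarrow> 'a \<Rightarrow> nat) \<Rightarrow> bool" where
  "hexagon_labelling V E idx \<longleftrightarrow> (\<forall>v\<in>V. bij_betw (idx v) (nbrs E v) {0, 1, 2})"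

definition hex_vertices :: "'a set \<Rightarrow> ('a \<times> nat) set" where
  "hex_vertices V = V \<times> {..<6}"

definition red_edges :: "'a set \<Rightarrow> ('a \<times> nat) set set" where
  "red_edges V = {{(v, i), (v, (i + 3) mod 6)} | v i. v \<in> V \<and> i < 6}"

definition blue_edges :: "'a set \<Rightarrow> ('a \<times> nat) set set" where
  "blue_edges V = {{(v, i), (v, (i + 1) mod 6)} | v i. v \<in> V \<and> i < 6}"

text \<open>The white edges e_{uv} and bar e_{uv} replacing the edge uv of G (oriented from v to u as
  in the paper). X = vertices with even index, Y = vertices with odd index.\<close>
definition white_e :: "('a \<Rightarrow> 'a \<Rightarrow> nat) \<Rightarrow> 'a \<Rightarrow> 'a \<Rightarrow> ('a \<times> nat) set" where
  "white_e idx u v =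
     (if even (idx v u) = even (idx u v)
      then {(v, idx v u), (u, (idx u v + 3) mod 6)}
      else {(v, idx v u), (u, idx u v)})"

definition white_ebar :: "('a \<Rightarrow> 'a \<Rightarrow> nat) \<Rightarrow> 'a \<Rightarrow> 'a \<Rightarrow> ('a \<times> nat) set" where
  "white_ebar idx u v =
     (if even (idx v u) = even (idx u v)
      then {(v, (idx v u + 3) mod 6), (u, idx u v)}
      else {(v, (idx v u + 3) mod 6), (u, (idx u v + 3) mod 6)})"

definition white_edges :: "'a set set \<Rightarrow> ('a \<Rightarrow> 'a \<Rightarrow> nat) \<Rightarrow> ('a \<times> nat) set set" where
  "white_edges E idx = {f | f u v. {u, v} \<in> E \<and> (f = white_e idx u v \<or> f = white_ebar idx u v)}"

definition hexagon_graph_edges :: "'a set \<Rightarrow> 'a set set \<Rightarrow> ('a \<Rightarrow> 'a \<Rightarrow> nat) \<Rightarrow> ('a \<times> nat) set set" where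
  "hexagon_graph_edges V E idx = red_edges V \<union> blue_edges V \<union> white_edges E idx"

definition blue_perfect_matching ::
  "'a set \<Rightarrow> 'a set set \<Rightarrow> ('a \<Rightarrow> 'a \<Rightarrow> nat) \<Rightarrow> ('a \<times> nat) set set \<Rightarrow> bool" where
  "blue_perfect_matching V E idx M \<longleftrightarrow>
     M \<subseteq> hexagon_graph_edges V E idx \<and> M \<subseteq> blue_edges V
     \<and> (\<forall>x\<in>hex_vertices V. \<exists>!e. e \<in> M \<and> x \<in> e)"

definition is_cycle :: "'b set set \<Rightarrow> bool" where
  "is_cycle C \<longleftrightarrow> (\<exists>xs. length xs \<ge> 3 \<and> distinct xs \<and>
      C = {{xs ! i, xs ! ((i + 1) mod length xs)} | i. i < length xs})"

text \<open>Edge sets of the connected components (with at least one edge) of the graph with edge set F.\<close>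
definition edge_adj :: "'b set set \<Rightarrow> ('b set \<times> 'b set) set" where
  "edge_adj F = {(e, f). e \<in> F \<and> f \<in> F \<and> e \<inter> f \<noteq> {}}"

definition component_edges :: "'b set set \<Rightarrow> 'b set \<Rightarrow> 'b set set" where
  "component_edges F e = {f \<in> F. (e, f) \<in> (edge_adj F)\<^sup>*}"

definition cycles_of :: "'b set set \<Rightarrow> 'b set set set" where
  "cycles_of F = component_edges F ` F"

definition induced_subgraph :: "'a set set \<Rightarrow> ('a \<Rightarrow> 'a \<Rightarrow> nat) \<Rightarrow> ('a \<times> nat) set set \<Rightarrow> 'a set set" where
  "induced_subgraph E idx C =
     {e \<in> E. \<exists>u v. e = {u, v} \<and> (white_e idx u v \<in> C \<or> white_ebar idx u v \<in> C)}"

text \<open>In a simple graph the edges incident with v correspond to the neighbours of v; a rotation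
  system is given by, for each v, a cyclic permutation rho v of the neighbours of v.\<close>
definition rotation_system :: "'a set \<Rightarrow> 'a set set \<Rightarrow> ('a \<Rightarrow> 'a \<Rightarrow> 'a) \<Rightarrow> bool" where
  "rotation_system V E \<rho> \<longleftrightarrow> (\<forall>v\<in>V. bij_betw (\<rho> v) (nbrs E v) (nbrs E v)
      \<and> (\<forall>u\<in>nbrs E v. \<forall>w\<in>nbrs E v. \<exists>k. (\<rho> v ^^ k) u = w))"

text \<open>Darts (u,v) are oriented edges. The face walk traversing edge uv from u to v continues with
  the edge v w where w = rho v u (i.e. pi_v(vu) = vw).\<close>
definition darts :: "'a set set \<Rightarrow> ('a \<times> 'a) set" where
  "darts E = {(u, v). {u, v} \<in> E}"

definition face_step :: "('a \<Rightarrow> 'a \<Rightarrow> 'a) \<Rightarrow> 'a \<times> 'a \<Rightarrow> 'a \<times> 'a" where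
  "face_step \<rho> d = (snd d, \<rho> (snd d) (fst d))"

definition face_boundary :: "('a \<Rightarrow> 'a \<Rightarrow> 'a) \<Rightarrow> 'a \<times> 'a \<Rightarrow> 'a set set" where
  "face_boundary \<rho> d = {{fst ((face_step \<rho> ^^ k) d), snd ((face_step \<rho> ^^ k) d)} | k. True}"

definition face_boundaries :: "'a set set \<Rightarrow> ('a \<Rightarrow> 'a \<Rightarrow> 'a) \<Rightarrow> 'a set set set" where
  "face_boundaries E \<rho> = face_boundary \<rho> ` darts E"

end

theory Submission
  imports Defs
begin

text \<open>
  A blue perfect matching M and the white edges W are the edge sets of two fixed-point-free
  involutions \<sigma> and \<tau> of the vertices of H, both reversing the parity of the index.
  Hence every component of M \<union> W is an even cycle, traversed by alternately applying \<sigma>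
  and \<tau>, i.e. by the orbits of \<phi> = \<tau> \<circ> \<sigma>.

  Inside each hexagon M is one of the two perfect matchings of the blue 6-cycle, and this
  binary choice is exactly a choice of one of the two cyclic orders of the three neighbours of
  v, i.e. a rotation at v. Representing the dart (u, v) by the even vertex of h_v at the position
  of u, one step of \<phi> (a blue edge, then a white edge) takes the vertex of a dart to the vertex
  of the next dart of its face. Hence the cycles of M \<union> W are the face boundaries of this
  rotation system, and every rotation system of the cubic graph arises in this way.
\<close>

section \<open>Two parity-reversing involutions\<close>

lemma edge_adj_sym: "sym (edge_adj F)"
  unfolding edge_adj_def sym_def by auto

locale involution_pair =
  fixes S :: "'b set" and \<sigma> \<tau> :: "'b \<Rightarrow> 'b" and P :: "'b \<Rightarrow> bool"
  assumes finite_S: "finite S"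
    and \<sigma>_in: "x \<in> S \<Longrightarrow> \<sigma> x \<in> S" and \<tau>_in: "x \<in> S \<Longrightarrow> \<tau> x \<in> S"
    and \<sigma>_\<sigma>: "x \<in> S \<Longrightarrow> \<sigma> (\<sigma> x) = x" and \<tau>_\<tau>: "x \<in> S \<Longrightarrow> \<tau> (\<tau> x) = x"
    and P_\<sigma>: "x \<in> S \<Longrightarrow> P (\<sigma> x) \<longleftrightarrow> \<not> P x" and P_\<tau>: "x \<in> S \<Longrightarrow> P (\<tau> x) \<longleftrightarrow> \<not> P x"
    and \<sigma>_neq_\<tau>: "x \<in> S \<Longrightarrow> \<sigma> x \<noteq> \<tau> x"
begin

definition pair_edges :: "'b set set" where
  "pair_edges = (\<lambda>x. {x, \<sigma> x}) ` S \<union> (\<lambda>x. {x, \<tau> x}) ` S"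

definition \<phi> :: "'b \<Rightarrow> 'b" where
  "\<phi> x = \<tau> (\<sigma> x)"

definition period :: "'b \<Rightarrow> nat" where
  "period x = (LEAST p. 0 < p \<and> (\<phi> ^^ p) x = x)"

definition walk :: "'b \<Rightarrow> nat \<Rightarrow> 'b" where
  "walk x i = (if even i then (\<phi> ^^ (i div 2)) x else \<sigma> ((\<phi> ^^ (i div 2)) x))"

definition orbit_cycle :: "'b \<Rightarrow> 'b set set" where
  "orbit_cycle x = {{walk x i, walk x (Suc i)} | i. True}"

lemma funpow_\<phi>_in: "x \<in> S \<Longrightarrow> (\<phi> ^^ k) x \<in> S"
  by (induction k) (simp_all add: \<phi>_def \<sigma>_in \<tau>_in)

lemma inj_on_funpow_\<phi>: "inj_on (\<phi> ^^ k) S"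
proof (induction k)
  case (Suc k)
  have "inj_on \<phi> S"
    by (rule inj_onI) (metis \<phi>_def \<sigma>_in \<sigma>_\<sigma> \<tau>_\<tau>)
  then show ?case
    using Suc funpow_\<phi>_in by (auto simp: inj_on_def)
qed simp

lemma funpow_\<phi>_periodic: assumes "x \<in> S" shows "\<exists>p>0. (\<phi> ^^ p) x = x"
proof -
  have "(\<lambda>k. (\<phi> ^^ k) x) ` UNIV \<subseteq> S"
    using funpow_\<phi>_in assms by auto
  then have "\<not> inj (\<lambda>k. (\<phi> ^^ k) x)"
    using finite_S finite_imageD finite_subset infinite_UNIV_nat by blast
  then obtain i j where "i < j" "(\<phi> ^^ i) x = (\<phi> ^^ j) x"
    by (metis (mono_tags, lifting) injI linorder_neqE_nat)
  then have "(\<phi> ^^ i) ((\<phi> ^^ (j - i)) x) = (\<phi> ^^ i) x"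
    by (metis add_diff_inverse_nat funpow_add less_imp_not_less o_apply)
  then have "(\<phi> ^^ (j - i)) x = x"
    using inj_on_funpow_\<phi>[of i] funpow_\<phi>_in assms by (meson inj_onD)
  then show ?thesis
    using \<open>i < j\<close> zero_less_diff by blast
qed

lemma period:
  assumes "x \<in> S"
  shows period_pos: "0 < period x" and funpow_period: "(\<phi> ^^ period x) x = x"
    and funpow_less_period: "0 < m \<Longrightarrow> m < period x \<Longrightarrow> (\<phi> ^^ m) x \<noteq> x"
proof -
  have "0 < period x \<and> (\<phi> ^^ period x) x = x"
    unfolding period_def by (rule LeastI_ex) (rule funpow_\<phi>_periodic[OF assms])
  then show "0 < period x" "(\<phi> ^^ period x) x = x" by auto
  show "0 < m \<Longrightarrow> m < period x \<Longrightarrow> (\<phi> ^^ m) x \<noteq> x"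
    unfolding period_def using not_less_Least by blast
qed

lemma period_ge_2: assumes "x \<in> S" shows "2 \<le> period x"
proof (rule ccontr)
  assume "\<not> 2 \<le> period x"
  then have "period x = 1"
    using period_pos[OF assms] by linarith
  then have "\<tau> (\<sigma> x) = x"
    using funpow_period[OF assms] by (simp add: \<phi>_def)
  then show False
    using \<sigma>_neq_\<tau> \<sigma>_in \<tau>_\<tau> assms by metis
qed

lemma walk_in: "x \<in> S \<Longrightarrow> walk x i \<in> S"
  by (simp add: walk_def funpow_\<phi>_in \<sigma>_in)

lemma walk_0: "walk x 0 = x"
  by (simp add: walk_def)

lemma walk_Suc: "x \<in> S \<Longrightarrow> walk x (Suc i) = (if even i then \<sigma> (walk x i) else \<tau> (walk x i))"
  by (auto simp: walk_def \<phi>_def elim!: oddE)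

lemma walk_Suc_inv: "x \<in> S \<Longrightarrow> walk x i = (if even i then \<sigma> (walk x (Suc i)) else \<tau> (walk x (Suc i)))"
  by (simp add: walk_Suc walk_in \<sigma>_\<sigma> \<tau>_\<tau>)

lemma P_walk: "x \<in> S \<Longrightarrow> P (walk x i) \<longleftrightarrow> (P x \<longleftrightarrow> even i)"
  by (induction i) (auto simp: walk_0 walk_Suc P_\<sigma> P_\<tau> walk_in)

lemma walk_mod_period: assumes "x \<in> S" shows "walk x (i mod (2 * period x)) = walk x i"
proof -
  have "(i mod (2 * period x)) div 2 = (i div 2) mod period x"
    by (simp add: mod_mult2_eq)
  moreover have "even (i mod (2 * period x)) \<longleftrightarrow> even i"
    by (simp add: mod_mult2_eq)
  ultimately show ?thesis
    by (simp add: walk_def funpow_mod_eq funpow_period[OF assms])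
qed

lemma inj_on_walk: assumes "x \<in> S" shows "inj_on (walk x) {..<2 * period x}"
proof (rule inj_onI)
  fix i j assume i: "i \<in> {..<2 * period x}" and j: "j \<in> {..<2 * period x}"
    and eq: "walk x i = walk x j"
  have "even i \<longleftrightarrow> even j"
    using P_walk[OF assms, of i] P_walk[OF assms, of j] eq by auto
  moreover have "(\<phi> ^^ (i div 2)) x = (\<phi> ^^ (j div 2)) x"
    using eq \<open>even i \<longleftrightarrow> even j\<close> \<sigma>_\<sigma> funpow_\<phi>_in[OF assms] unfolding walk_def
    by (metis (full_types))
  then have "i div 2 = j div 2"
    using inj_on_funpow_least[where f = \<phi> and n = "period x" and s = x] period[OF assms] i j
    by (auto dest: inj_onD)
  ultimately show "i = j"
    by (metis div_mult_mod_eq even_iff_mod_2_eq_zero odd_iff_mod_2_eq_one)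
qed

lemma is_cycle_orbit_cycle: assumes "x \<in> S" shows "is_cycle (orbit_cycle x)"
  unfolding is_cycle_def
proof (intro exI conjI)
  let ?n = "2 * period x"
  let ?xs = "map (walk x) [0..<?n]"
  show "3 \<le> length ?xs" "distinct ?xs"
    using period_ge_2[OF assms] inj_on_walk[OF assms] by (auto simp: distinct_map atLeast0LessThan)
  have nth: "i < ?n \<Longrightarrow> ?xs ! i = walk x i" for i
    by simp
  have n: "0 < ?n"
    using period_pos[OF assms] by simp
  show "orbit_cycle x = {{?xs ! i, ?xs ! ((i + 1) mod length ?xs)} | i. i < length ?xs}"
  proof (intro equalityI subsetI)
    fix e assume "e \<in> orbit_cycle x"
    then obtain i where e: "e = {walk x i, walk x (Suc i)}"
      unfolding orbit_cycle_def by blast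
    define j where "j = i mod ?n"
    have "j < ?n"
      using n by (simp add: j_def)
    moreover have "?xs ! j = walk x i" "?xs ! ((j + 1) mod ?n) = walk x (Suc i)"
      using n by (simp_all add: j_def walk_mod_period[OF assms] mod_Suc_eq)
    ultimately show "e \<in> {{?xs ! i, ?xs ! ((i + 1) mod length ?xs)} | i. i < length ?xs}"
      using e by (intro CollectI exI[of _ j]) simp
  next
    fix e assume "e \<in> {{?xs ! i, ?xs ! ((i + 1) mod length ?xs)} | i. i < length ?xs}"
    then obtain i where "i < ?n" "e = {?xs ! i, ?xs ! ((i + 1) mod ?n)}"
      by auto
    then have "e = {walk x i, walk x (Suc i)}"
      using n by (simp add: nth walk_mod_period[OF assms])
    then show "e \<in> orbit_cycle x"
      unfolding orbit_cycle_def by blast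
  qed
qed

lemma walk_add_period: "x \<in> S \<Longrightarrow> walk x (j + 2 * period x) = walk x j"
  by (metis mod_add_self2 walk_mod_period)

lemma walk_edge_in_orbit_cycle: "{walk x i, walk x (Suc i)} \<in> orbit_cycle x"
  unfolding orbit_cycle_def by blast

lemma start_edge_in_orbit_cycle: "{x, \<sigma> x} \<in> orbit_cycle x"
  using walk_edge_in_orbit_cycle[of x 0] by (simp add: walk_def)

text \<open>Every vertex of the walk has its \<sigma>-edge and its \<tau>-edge on the walk: one is traversed when
  leaving the vertex, the other (by periodicity) when arriving at it.\<close>
lemma orbit_cycle_closed:
  assumes x: "x \<in> S" and "e \<in> orbit_cycle x" "y \<in> e"
  shows "{y, \<sigma> y} \<in> orbit_cycle x" "{y, \<tau> y} \<in> orbit_cycle x"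
proof -
  obtain j where y: "y = walk x j"
    using assms(2,3) unfolding orbit_cycle_def by blast
  define m where "m = j + 2 * period x - 1"
  have Suc_m: "Suc m = j + 2 * period x"
    using period_pos[OF x] by (simp add: m_def)
  have leave: "{y, (if even j then \<sigma> else \<tau>) y} \<in> orbit_cycle x"
    using walk_edge_in_orbit_cycle[of x j] walk_Suc[OF x, of j] y by (cases "even j") simp_all
  have "walk x (Suc m) = y" "even m \<longleftrightarrow> odd j"
    using Suc_m by (simp_all add: y walk_add_period[OF x]) presburger
  then have "walk x m = (if even j then \<tau> y else \<sigma> y)" "{walk x m, y} \<in> orbit_cycle x"
    using walk_Suc_inv[OF x, of m] walk_edge_in_orbit_cycle[of x m] by simp_all
  then show "{y, \<sigma> y} \<in> orbit_cycle x" "{y, \<tau> y} \<in> orbit_cycle x"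
    using leave by (cases "even j"; simp add: insert_commute)+
qed

lemma funpow_\<phi>_\<tau>_edge_in_orbit_cycle:
  assumes "x \<in> S" shows "{(\<phi> ^^ k) x, \<tau> ((\<phi> ^^ k) x)} \<in> orbit_cycle x"
proof -
  have "walk x (2 * k) = (\<phi> ^^ k) x"
    by (simp add: walk_def)
  then show ?thesis
    using orbit_cycle_closed(2)[OF assms walk_edge_in_orbit_cycle] by (metis insertI1)
qed

lemma orbit_cycle_subset: assumes "x \<in> S" shows "orbit_cycle x \<subseteq> pair_edges"
proof
  fix e assume "e \<in> orbit_cycle x"
  then obtain i where "e = {walk x i, walk x (Suc i)}"
    unfolding orbit_cycle_def by blast
  then show "e \<in> pair_edges"
    unfolding pair_edges_def using walk_in[OF assms] by (auto simp: walk_Suc[OF assms])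
qed

lemma pair_edges_at: assumes "f \<in> pair_edges" "y \<in> f" shows "f = {y, \<sigma> y} \<or> f = {y, \<tau> y}"
  using assms unfolding pair_edges_def by (auto simp: \<sigma>_\<sigma> \<tau>_\<tau>)

lemma orbit_cycle_connected:
  assumes x: "x \<in> S" and "e \<in> orbit_cycle x" "e' \<in> orbit_cycle x"
  shows "(e, e') \<in> (edge_adj pair_edges)\<^sup>*"
proof -
  have from_start: "({x, \<sigma> x}, {walk x i, walk x (Suc i)}) \<in> (edge_adj pair_edges)\<^sup>*" for i
  proof (induction i)
    case 0
    then show ?case by (simp add: walk_def)
  next
    case (Suc i)
    have "({walk x i, walk x (Suc i)}, {walk x (Suc i), walk x (Suc (Suc i))}) \<in> edge_adj pair_edges"
      using orbit_cycle_subset[OF x] walk_edge_in_orbit_cycle unfolding edge_adj_def by blast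
    with Suc show ?case
      by (rule rtrancl_into_rtrancl)
  qed
  obtain i i' where "e = {walk x i, walk x (Suc i)}" "e' = {walk x i', walk x (Suc i')}"
    using assms(2,3) unfolding orbit_cycle_def by blast
  then show ?thesis
    using from_start[of i] from_start[of i'] sym_rtrancl[OF edge_adj_sym]
    by (meson rtrancl_trans symD)
qed

lemma component_edges_orbit_cycle:
  assumes x: "x \<in> S" and e: "e \<in> orbit_cycle x"
  shows "component_edges pair_edges e = orbit_cycle x"
proof (intro equalityI subsetI)
  fix f assume "f \<in> component_edges pair_edges e"
  then have "(e, f) \<in> (edge_adj pair_edges)\<^sup>*"
    unfolding component_edges_def by blast
  then show "f \<in> orbit_cycle x"
  proof (induction rule: rtrancl_induct)
    case (step f g)
    then obtain y where "y \<in> f" "y \<in> g" "g \<in> pair_edges"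
      unfolding edge_adj_def by blast
    then show ?case
      using pair_edges_at orbit_cycle_closed[OF x step.IH] by metis
  qed (rule e)
next
  fix f assume "f \<in> orbit_cycle x"
  then show "f \<in> component_edges pair_edges e"
    unfolding component_edges_def
    using orbit_cycle_subset[OF x] orbit_cycle_connected[OF x e] by blast
qed

lemma pair_edge_in_orbit_cycle:
  assumes "e \<in> pair_edges" shows "\<exists>x\<in>S. P x \<and> e \<in> orbit_cycle x"
proof -
  obtain z where z: "z \<in> S" "z \<in> e"
    using assms unfolding pair_edges_def by blast
  define x where "x = (if P z then z else \<sigma> z)"
  have "x \<in> S" "P x" "z \<in> {x, \<sigma> x}"
    using z \<sigma>_in P_\<sigma> \<sigma>_\<sigma> by (auto simp: x_def)
  moreover note start_edge_in_orbit_cycle[of x]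
  ultimately show ?thesis
    using orbit_cycle_closed pair_edges_at[OF assms z(2)] by metis
qed

lemma cycles_of_pair_edges: "cycles_of pair_edges = orbit_cycle ` {x \<in> S. P x}"
proof (intro equalityI subsetI)
  fix C assume "C \<in> cycles_of pair_edges"
  then obtain e where "e \<in> pair_edges" "C = component_edges pair_edges e"
    unfolding cycles_of_def by blast
  then show "C \<in> orbit_cycle ` {x \<in> S. P x}"
    using pair_edge_in_orbit_cycle component_edges_orbit_cycle by blast
next
  fix C assume "C \<in> orbit_cycle ` {x \<in> S. P x}"
  then obtain x where x: "x \<in> S" "C = orbit_cycle x"
    by blast
  then show "C \<in> cycles_of pair_edges"
    unfolding cycles_of_def
    using start_edge_in_orbit_cycle orbit_cycle_subset component_edges_orbit_cycle
    by (metis image_eqI subsetD)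
qed

lemma orbit_cycle_vertex:
  assumes x: "x \<in> S" "P x" and "e \<in> orbit_cycle x" "y \<in> e" "P y"
  shows "\<exists>k. y = (\<phi> ^^ k) x"
proof -
  obtain j where y: "y = walk x j"
    using assms(3,4) unfolding orbit_cycle_def by blast
  then have "even j"
    using P_walk[OF x(1), of j] x(2) assms(5) by simp
  then show ?thesis
    using y by (auto simp: walk_def)
qed

lemma \<sigma>_edges_disjoint_\<tau>_edges: "(\<lambda>x. {x, \<sigma> x}) ` S \<inter> (\<lambda>x. {x, \<tau> x}) ` S = {}"
  using \<sigma>_neq_\<tau> \<tau>_\<tau> by (fastforce simp: doubleton_eq_iff)

end

section \<open>The hexagon graph of a labelled cubic graph\<close>

definition hex_pos :: "nat \<Rightarrow> bool \<Rightarrow> nat" where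
  "hex_pos i p = (if even i = p then i else i + 3)"

lemma hex_pos:
  assumes "i < 3"
  shows hex_pos_less: "hex_pos i p < 6" and hex_pos_mod_3: "hex_pos i p mod 3 = i"
    and even_hex_pos: "even (hex_pos i p) \<longleftrightarrow> p"
  using assms by (auto simp: hex_pos_def)

lemma hex_pos_mod_3_even: "j < 6 \<Longrightarrow> hex_pos (j mod 3) (even j) = j"
  by (auto simp: hex_pos_def) presburger+

lemma hex_vertices_iff: "x \<in> hex_vertices V \<longleftrightarrow> fst x \<in> V \<and> snd x < 6"
  by (cases x) (auto simp: hex_vertices_def)

lemma darts_iff: "(u, v) \<in> darts E \<longleftrightarrow> {u, v} \<in> E"
  by (simp add: darts_def)

lemma derangement_of_3_is_shift:
  fixes f :: "nat \<Rightarrow> nat"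
  assumes "inj_on f {..<3}" "f ` {..<3} \<subseteq> {..<3}" "\<And>i. i < 3 \<Longrightarrow> f i \<noteq> i" "i < 3"
  shows "f i = (i + f 0) mod 3"
proof -
  have "f j \<in> {0, 1, 2}" if "j < 3" for j
    using assms(2) that by fastforce
  then have "f 0 \<in> {0, 1, 2}" "f 1 \<in> {0, 1, 2}" "f 2 \<in> {0, 1, 2}"
    by simp_all
  moreover have "f 0 \<noteq> f 1" "f 0 \<noteq> f 2" "f 1 \<noteq> f 2"
    using assms(1) by (auto dest: inj_onD)
  moreover have "f 0 \<noteq> 0" "f 1 \<noteq> 1" "f 2 \<noteq> 2"
    using assms(3) by simp_all
  ultimately have "f 0 = 1 \<and> f 1 = 2 \<and> f 2 = 0 \<or> f 0 = 2 \<and> f 1 = 0 \<and> f 2 = 1"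
    by auto
  moreover have "i = 0 \<or> i = 1 \<or> i = 2"
    using assms(4) by auto
  ultimately show ?thesis
    by auto
qed

locale labelled_cubic_graph =
  fixes V :: "'a set" and E :: "'a set set" and idx :: "'a \<Rightarrow> 'a \<Rightarrow> nat"
  assumes cubic: "cubic_graph V E" and labelling: "hexagon_labelling V E idx"
begin

definition nbr_at :: "'a \<Rightarrow> nat \<Rightarrow> 'a" where
  "nbr_at v i = inv_into (nbrs E v) (idx v) i"

lemma finite_V: "finite V"
  using cubic by (simp add: cubic_graph_def)

lemma edge_ends: assumes "{u, v} \<in> E" shows "u \<in> V" "v \<in> V" "u \<noteq> v"
proof -
  obtain a b where "{u, v} = {a, b}" "a \<noteq> b" "a \<in> V" "b \<in> V"
    using assms cubic unfolding cubic_graph_def by metis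
  then show "u \<in> V" "v \<in> V" "u \<noteq> v"
    by (auto simp: doubleton_eq_iff)
qed

lemma edge_sym: "{u, v} \<in> E \<Longrightarrow> {v, u} \<in> E"
  by (simp add: insert_commute)

lemma bij_betw_idx: "v \<in> V \<Longrightarrow> bij_betw (idx v) (nbrs E v) {0, 1, 2}"
  using labelling by (simp add: hexagon_labelling_def)

lemma idx_less: assumes "{u, v} \<in> E" shows "idx v u < 3"
  using bij_betw_apply[OF bij_betw_idx[OF edge_ends(2)[OF assms]], of u] assms
  by (auto simp: nbrs_def)

lemma nbr_at_idx: assumes "{u, v} \<in> E" shows "nbr_at v (idx v u) = u"
  unfolding nbr_at_def using bij_betw_inv_into_left[OF bij_betw_idx[OF edge_ends(2)[OF assms]]] assms
  by (simp add: nbrs_def)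

lemma
  assumes "v \<in> V" "i < 3"
  shows nbr_at_edge: "{nbr_at v i, v} \<in> E" and idx_nbr_at: "idx v (nbr_at v i) = i"
proof -
  have i: "i \<in> {0, 1, 2}"
    using assms(2) by auto
  show "{nbr_at v i, v} \<in> E"
    using bij_betw_apply[OF bij_betw_inv_into[OF bij_betw_idx[OF assms(1)]] i]
    by (simp add: nbr_at_def nbrs_def)
  show "idx v (nbr_at v i) = i"
    unfolding nbr_at_def by (rule bij_betw_inv_into_right[OF bij_betw_idx[OF assms(1)] i])
qed

text \<open>Every white edge joins v_j to the vertex of h_u whose position is congruent to i_{u(v)}
  modulo 3 and has the parity opposite to j, where u is the neighbour of v of index j mod 3.\<close>
definition white_mate :: "'a \<times> nat \<Rightarrow> 'a \<times> nat" where
  "white_mate x = (let v = fst x; u = nbr_at v (snd x mod 3) in (u, hex_pos (idx u v) (odd (snd x))))"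

text \<open>The dart (u, v) is represented by the even vertex of h_v at the position of u.\<close>
definition dart_vertex :: "'a \<times> 'a \<Rightarrow> 'a \<times> nat" where
  "dart_vertex d = (snd d, hex_pos (idx (snd d) (fst d)) True)"

definition dart_white_edge :: "'a \<times> 'a \<Rightarrow> ('a \<times> nat) set" where
  "dart_white_edge d = {dart_vertex d, white_mate (dart_vertex d)}"

lemma
  assumes "x \<in> hex_vertices V"
  shows white_mate_in: "white_mate x \<in> hex_vertices V"
    and white_mate_white_mate: "white_mate (white_mate x) = x"
    and even_white_mate: "even (snd (white_mate x)) \<longleftrightarrow> odd (snd x)"
    and fst_white_mate: "fst (white_mate x) \<noteq> fst x"
proof -
  obtain v j where x: "x = (v, j)" "v \<in> V" "j < 6"
    using assms by (cases x) (auto simp: hex_vertices_iff)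
  define u where "u = nbr_at v (j mod 3)"
  have uv: "{u, v} \<in> E" "idx v u = j mod 3"
    using nbr_at_edge[OF x(2)] idx_nbr_at[OF x(2)] by (simp_all add: u_def)
  have mate: "white_mate x = (u, hex_pos (idx u v) (odd j))"
    by (simp add: white_mate_def Let_def x u_def)
  show "white_mate x \<in> hex_vertices V" "even (snd (white_mate x)) \<longleftrightarrow> odd (snd x)"
    "fst (white_mate x) \<noteq> fst x"
    using mate x edge_ends[OF uv(1)] hex_pos[OF idx_less[OF edge_sym[OF uv(1)]]]
    by (auto simp: hex_vertices_iff)
  show "white_mate (white_mate x) = x"
    using mate uv hex_pos[OF idx_less[OF edge_sym[OF uv(1)]]] nbr_at_idx[OF edge_sym[OF uv(1)]]
      hex_pos_mod_3_even[OF x(3)]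
    by (simp add: white_mate_def Let_def x)
qed

lemma dart_vertex_pair: "dart_vertex (u, v) = (v, hex_pos (idx v u) True)"
  by (simp add: dart_vertex_def)

lemma white_mate_dart_vertex:
  assumes "{u, v} \<in> E" shows "white_mate (dart_vertex (u, v)) = (u, hex_pos (idx u v) False)"
  using hex_pos[OF idx_less[OF assms]] nbr_at_idx[OF assms]
  by (simp add: white_mate_def Let_def dart_vertex_pair)

lemma dart_white_edge_pair:
  "{u, v} \<in> E \<Longrightarrow> dart_white_edge (u, v) = {(v, hex_pos (idx v u) True), (u, hex_pos (idx u v) False)}"
  unfolding dart_white_edge_def by (simp add: white_mate_dart_vertex) (simp add: dart_vertex_pair)

lemma inj_on_dart_vertex: "inj_on dart_vertex (darts E)"
proof (rule inj_onI)
  fix d d' assume d: "d \<in> darts E" and d': "d' \<in> darts E" and eq: "dart_vertex d = dart_vertex d'"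
  obtain u v u' v' where uv: "d = (u, v)" "d' = (u', v')" "{u, v} \<in> E" "{u', v'} \<in> E"
    using d d' by (auto simp: darts_def)
  have "v = v'" "hex_pos (idx v u) True mod 3 = hex_pos (idx v u') True mod 3"
    using eq by (auto simp: uv dart_vertex_pair)
  then have "idx v u = idx v u'"
    using hex_pos_mod_3[OF idx_less[OF uv(3)]] hex_pos_mod_3[OF idx_less[OF uv(4)]] by simp
  then show "d = d'"
    using nbr_at_idx uv \<open>v = v'\<close> by metis
qed

lemma dart_vertex_image: "dart_vertex ` darts E = {x \<in> hex_vertices V. even (snd x)}"
proof (intro equalityI subsetI)
  fix x assume "x \<in> dart_vertex ` darts E"
  then obtain u v where "{u, v} \<in> E" "x = dart_vertex (u, v)"
    by (auto simp: darts_def)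
  then show "x \<in> {x \<in> hex_vertices V. even (snd x)}"
    using edge_ends hex_pos[OF idx_less] by (auto simp: dart_vertex_pair hex_vertices_iff)
next
  fix x assume "x \<in> {x \<in> hex_vertices V. even (snd x)}"
  then obtain v j where x: "x = (v, j)" "v \<in> V" "j < 6" "even j"
    by (cases x) (auto simp: hex_vertices_iff)
  define u where "u = nbr_at v (j mod 3)"
  have "{u, v} \<in> E" "dart_vertex (u, v) = x"
    using nbr_at_edge[OF x(2)] idx_nbr_at[OF x(2)] hex_pos_mod_3_even[OF x(3)] x(4)
    by (simp_all add: u_def dart_vertex_pair x)
  then show "x \<in> dart_vertex ` darts E"
    by (force simp: darts_def)
qed

lemma white_e_white_ebar:
  assumes "{u, v} \<in> E"
  shows "{white_e idx u v, white_ebar idx u v} = {dart_white_edge (u, v), dart_white_edge (v, u)}"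
proof -
  have "idx v u = 0 \<or> idx v u = 1 \<or> idx v u = 2" "idx u v = 0 \<or> idx u v = 1 \<or> idx u v = 2"
    using idx_less[OF assms] idx_less[OF edge_sym[OF assms]] by auto
  then have "white_e idx u v = dart_white_edge (u, v) \<and> white_ebar idx u v = dart_white_edge (v, u)
      \<or> white_e idx u v = dart_white_edge (v, u) \<and> white_ebar idx u v = dart_white_edge (u, v)"
    unfolding dart_white_edge_pair[OF assms] dart_white_edge_pair[OF edge_sym[OF assms]]
      white_e_def white_ebar_def hex_pos_def
    by (elim disjE) (simp_all, auto)
  then show ?thesis
    by auto
qed

lemma white_edges_eq_dart_white_edges: "white_edges E idx = dart_white_edge ` darts E"
proof (intro equalityI subsetI)
  fix f assume "f \<in> white_edges E idx"
  then obtain u v where uv: "{u, v} \<in> E" "f \<in> {white_e idx u v, white_ebar idx u v}"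
    unfolding white_edges_def by blast
  then have "f \<in> dart_white_edge ` {(u, v), (v, u)}"
    using white_e_white_ebar by auto
  moreover have "{(u, v), (v, u)} \<subseteq> darts E"
    using uv(1) edge_sym by (auto simp: darts_iff)
  ultimately show "f \<in> dart_white_edge ` darts E"
    by blast
next
  fix f assume "f \<in> dart_white_edge ` darts E"
  then obtain u v where uv: "{u, v} \<in> E" "f = dart_white_edge (u, v)"
    by (auto simp: darts_def)
  then have "f \<in> {white_e idx u v, white_ebar idx u v}"
    using white_e_white_ebar[OF uv(1)] by blast
  then show "f \<in> white_edges E idx"
    unfolding white_edges_def using uv(1) by blast
qed

lemma white_edges_eq: "white_edges E idx = (\<lambda>x. {x, white_mate x}) ` hex_vertices V"
proof -
  have "(\<lambda>x. {x, white_mate x}) ` hex_vertices V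
      = (\<lambda>x. {x, white_mate x}) ` {x \<in> hex_vertices V. even (snd x)}"
  proof (intro equalityI subsetI)
    fix e assume "e \<in> (\<lambda>x. {x, white_mate x}) ` hex_vertices V"
    then obtain x where x: "x \<in> hex_vertices V" "e = {x, white_mate x}"
      by blast
    then have "e = {white_mate x, white_mate (white_mate x)}"
      by (auto simp: white_mate_white_mate)
    then show "e \<in> (\<lambda>x. {x, white_mate x}) ` {x \<in> hex_vertices V. even (snd x)}"
      using x white_mate_in even_white_mate by (cases "even (snd x)") auto
  qed blast
  then show ?thesis
    by (simp add: white_edges_eq_dart_white_edges dart_vertex_image[symmetric] image_image
        dart_white_edge_def)
qed

definition shift_rotation :: "('a \<Rightarrow> bool) \<Rightarrow> 'a \<Rightarrow> 'a \<Rightarrow> 'a" where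
  "shift_rotation b v u = nbr_at v ((idx v u + (if b v then 1 else 2)) mod 3)"

lemma funpow_shift_rotation:
  assumes "{u, v} \<in> E"
  shows "(shift_rotation b v ^^ k) u = nbr_at v ((idx v u + k * (if b v then 1 else 2)) mod 3)"
proof (induction k)
  case 0
  then show ?case
    using idx_less[OF assms] nbr_at_idx[OF assms] by simp
next
  case (Suc k)
  define m where "m = (idx v u + k * (if b v then 1 else 2)) mod 3"
  have "m < 3"
    by (simp add: m_def)
  have "(shift_rotation b v ^^ Suc k) u = shift_rotation b v (nbr_at v m)"
    using Suc by (simp add: m_def)
  also have "\<dots> = nbr_at v ((m + (if b v then 1 else 2)) mod 3)"
    using idx_nbr_at[OF edge_ends(2)[OF assms] \<open>m < 3\<close>] by (simp add: shift_rotation_def)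
  also have "(m + (if b v then 1 else 2)) mod 3 = (idx v u + Suc k * (if b v then 1 else 2)) mod 3"
    unfolding m_def mod_add_left_eq by (simp only: mult_Suc ac_simps)
  finally show ?case .
qed

lemma shift_mod_3_reaches:
  fixes a b c :: nat
  assumes "a < 3" "b < 3" "c = 1 \<or> c = 2"
  shows "(a + c * (b + 3 - a) * c) mod 3 = b"
proof -
  have "a = 0 \<or> a = 1 \<or> a = 2" "b = 0 \<or> b = 1 \<or> b = 2"
    using assms(1,2) by auto
  then show ?thesis
    using assms(3) by (elim disjE) simp_all
qed

lemma rotation_system_shift_rotation: "rotation_system V E (shift_rotation b)"
  unfolding rotation_system_def
proof (rule ballI, rule conjI)
  fix v assume v: "v \<in> V"
  let ?c = "if b v then 1 else 2 :: nat"
  have iter: "(shift_rotation b v ^^ k) u \<in> nbrs E v"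
    "idx v ((shift_rotation b v ^^ k) u) = (idx v u + k * ?c) mod 3" if "u \<in> nbrs E v" for u k
    using that funpow_shift_rotation[of u v] nbr_at_edge[OF v] idx_nbr_at[OF v]
    by (simp_all add: nbrs_def)
  have cube: "(shift_rotation b v ^^ 3) u = u" if u: "u \<in> nbrs E v" for u
  proof -
    have "(idx v u + 3 * ?c) mod 3 = idx v u"
      using idx_less u by (simp add: nbrs_def)
    then show ?thesis
      using funpow_shift_rotation[where u = u and v = v and b = b and k = 3] nbr_at_idx u by (simp add: nbrs_def)
  qed
  show "bij_betw (shift_rotation b v) (nbrs E v) (nbrs E v)"
  proof (rule bij_betw_byWitness[where f' = "shift_rotation b v ^^ 2"])
    show "\<forall>u\<in>nbrs E v. (shift_rotation b v ^^ 2) (shift_rotation b v u) = u"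
      using cube by (simp add: numeral_3_eq_3 numeral_2_eq_2)
    show "\<forall>u\<in>nbrs E v. shift_rotation b v ((shift_rotation b v ^^ 2) u) = u"
      using cube by (simp add: numeral_3_eq_3 numeral_2_eq_2 funpow_swap1)
    show "shift_rotation b v ` nbrs E v \<subseteq> nbrs E v" "(shift_rotation b v ^^ 2) ` nbrs E v \<subseteq> nbrs E v"
      using iter(1)[where k = 1] iter(1)[where k = 2] by auto
  qed
  show "\<forall>u\<in>nbrs E v. \<forall>w\<in>nbrs E v. \<exists>k. (shift_rotation b v ^^ k) u = w"
  proof (intro ballI)
    fix u w assume u: "u \<in> nbrs E v" and w: "w \<in> nbrs E v"
    let ?k = "?c * (idx v w + 3 - idx v u)"
    have "(idx v u + ?k * ?c) mod 3 = idx v w"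
      using u w idx_less by (intro shift_mod_3_reaches) (auto simp: nbrs_def)
    then have "idx v ((shift_rotation b v ^^ ?k) u) = idx v w"
      using iter(2)[OF u] by simp
    then show "\<exists>k. (shift_rotation b v ^^ k) u = w"
      using iter(1)[OF u] u w nbr_at_idx by (metis nbrs_def mem_Collect_eq)
  qed
qed

lemma rotation_system_edge:
  assumes "rotation_system V E r" "{u, v} \<in> E" shows "{r v u, v} \<in> E"
  using assms edge_ends(2)[OF assms(2)] unfolding rotation_system_def bij_betw_def nbrs_def by blast

text \<open>A cyclic permutation of three neighbours has no fixed point, so it shifts their indices by 1
  or by 2.\<close>
lemma rotation_system_eq_shift_rotation:
  assumes r: "rotation_system V E r" and uv: "{u, v} \<in> E"
  shows "r v u = shift_rotation (\<lambda>v. idx v (r v (nbr_at v 0)) = 1) v u"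
proof -
  have v: "v \<in> V"
    using edge_ends(2)[OF uv] .
  have bij: "bij_betw (r v) (nbrs E v) (nbrs E v)"
    and trans: "\<forall>a\<in>nbrs E v. \<forall>c\<in>nbrs E v. \<exists>k. (r v ^^ k) a = c"
    using r v unfolding rotation_system_def by auto
  have nbr: "i < 3 \<Longrightarrow> nbr_at v i \<in> nbrs E v" for i
    using nbr_at_edge[OF v] by (simp add: nbrs_def)
  define f where "f i = idx v (r v (nbr_at v i))" for i
  have r_nbr_at: "r v (nbr_at v i) = nbr_at v (f i)" "f i < 3" if "i < 3" for i
    using bij_betw_apply[OF bij nbr[OF that]] nbr_at_idx idx_less by (auto simp: f_def nbrs_def)
  have "inj_on f {..<3}"
  proof (rule inj_onI)
    fix i j assume "i \<in> {..<3}" "j \<in> {..<3}" "f i = f j"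
    then have "nbr_at v i = nbr_at v j"
      using r_nbr_at inj_onD[OF bij_betw_imp_inj_on[OF bij]] nbr by (metis lessThan_iff)
    then show "i = j"
      using idx_nbr_at[OF v] \<open>i \<in> {..<3}\<close> \<open>j \<in> {..<3}\<close> by (metis lessThan_iff)
  qed
  moreover have no_fixpoint: "f i \<noteq> i" if i: "i < 3" for i
  proof
    assume "f i = i"
    then have "(r v ^^ k) (nbr_at v i) = nbr_at v i" for k
      using r_nbr_at[OF i] by (induction k) simp_all
    moreover obtain k where "(r v ^^ k) (nbr_at v i) = nbr_at v ((i + 1) mod 3)"
      using trans nbr i by (meson mod_less_divisor zero_less_numeral)
    ultimately have "i = (i + 1) mod 3"
      using idx_nbr_at[OF v] i by (metis mod_less_divisor zero_less_numeral)
    then show False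
      using i by presburger
  qed
  ultimately have shift: "f i = (i + f 0) mod 3" if "i < 3" for i
    using derangement_of_3_is_shift[of f] r_nbr_at that by auto
  have "f 0 = (if f 0 = 1 then 1 else 2)"
    using shift[of 0] r_nbr_at(2)[of 0] no_fixpoint[of 0] by auto
  then show ?thesis
    using r_nbr_at[OF idx_less[OF uv]] shift[OF idx_less[OF uv]] nbr_at_idx[OF uv]
    by (simp add: shift_rotation_def f_def)
qed

lemma face_step_pair: "face_step r (u, v) = (v, r v u)"
  by (simp add: face_step_def)

lemma funpow_face_step_in_darts:
  assumes "rotation_system V E r" "d \<in> darts E" shows "(face_step r ^^ k) d \<in> darts E"
proof (induction k)
  case (Suc k)
  then obtain u v where "(face_step r ^^ k) d = (u, v)" "{u, v} \<in> E"
    by (auto simp: darts_def)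
  then show ?case
    using rotation_system_edge[OF assms(1)] by (simp add: face_step_pair darts_iff insert_commute)
qed (use assms(2) in simp)

lemma face_boundaries_cong:
  assumes r: "rotation_system V E r" and eq: "\<And>u v. {u, v} \<in> E \<Longrightarrow> r v u = r' v u"
  shows "face_boundaries E r = face_boundaries E r'"
proof -
  have "(face_step r ^^ k) d = (face_step r' ^^ k) d" if d: "d \<in> darts E" for d k
  proof (induction k)
    case (Suc k)
    obtain u v where "(face_step r ^^ k) d = (u, v)" "{u, v} \<in> E"
      using funpow_face_step_in_darts[OF r d, of k] by (auto simp: darts_def)
    then show ?case
      using Suc eq by (simp add: face_step_pair)
  qed simp
  then show ?thesis
    unfolding face_boundaries_def face_boundary_def by (intro image_cong) auto
qed

end

section \<open>Blue perfect matchings\<close>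

text \<open>In each hexagon the blue 6-cycle has two perfect matchings; b v selects the one
  containing v_0 v_1.\<close>
definition blue_mate :: "('a \<Rightarrow> bool) \<Rightarrow> 'a \<times> nat \<Rightarrow> 'a \<times> nat" where
  "blue_mate b x = (fst x, if even (snd x) = b (fst x) then (snd x + 1) mod 6 else (snd x + 5) mod 6)"

definition blue_matching :: "'a set \<Rightarrow> ('a \<Rightarrow> bool) \<Rightarrow> ('a \<times> nat) set set" where
  "blue_matching V b = (\<lambda>x. {x, blue_mate b x}) ` hex_vertices V"

lemma mod_6_succ_pred:
  fixes j :: nat
  assumes "j < 6"
  shows "((j + 1) mod 6 + 5) mod 6 = j" "((j + 5) mod 6 + 1) mod 6 = j"
    "even ((j + 1) mod 6) \<longleftrightarrow> odd j" "even ((j + 5) mod 6) \<longleftrightarrow> odd j"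
  using assms by presburger+

lemma
  assumes "x \<in> hex_vertices V"
  shows blue_mate_in: "blue_mate b x \<in> hex_vertices V"
    and blue_mate_blue_mate: "blue_mate b (blue_mate b x) = x"
    and fst_blue_mate: "fst (blue_mate b x) = fst x"
    and even_blue_mate: "even (snd (blue_mate b x)) \<longleftrightarrow> odd (snd x)"
  using assms mod_6_succ_pred[of "snd x"] by (auto simp: blue_mate_def hex_vertices_iff)

lemma blue_matching_eq:
  "blue_matching V b = {{(v, i), (v, (i + 1) mod 6)} | v i. v \<in> V \<and> i < 6 \<and> even i = b v}"
proof (intro equalityI subsetI)
  fix e assume "e \<in> blue_matching V b"
  then obtain v j where e: "e = {(v, j), blue_mate b (v, j)}" "v \<in> V" "j < 6"
    by (auto simp: blue_matching_def hex_vertices_def)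
  obtain i where "i < 6" "even i = b v" "e = {(v, i), (v, (i + 1) mod 6)}"
  proof (cases "even j = b v")
    case True
    then show ?thesis
      using that[of j] e by (simp add: blue_mate_def)
  next
    case False
    then show ?thesis
      using that[of "(j + 5) mod 6"] e mod_6_succ_pred[OF e(3)]
      by (simp add: blue_mate_def insert_commute)
  qed
  then show "e \<in> {{(v, i), (v, (i + 1) mod 6)} | v i. v \<in> V \<and> i < 6 \<and> even i = b v}"
    using e(2) by blast
next
  fix e assume "e \<in> {{(v, i), (v, (i + 1) mod 6)} | v (i :: nat). v \<in> V \<and> i < 6 \<and> even i = b v}"
  then obtain v i where "e = {(v, i), (v, (i + 1) mod 6)}" "v \<in> V" "i < 6" "even i = b v"
    by blast
  then have "e = {(v, i), blue_mate b (v, i)}" "(v, i) \<in> hex_vertices V"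
    by (simp_all add: blue_mate_def hex_vertices_def)
  then show "e \<in> blue_matching V b"
    unfolding blue_matching_def by blast
qed

lemma blue_perfect_matching_blue_matching: "blue_perfect_matching V E idx (blue_matching V b)"
  unfolding blue_perfect_matching_def
proof (intro conjI ballI)
  show blue: "blue_matching V b \<subseteq> blue_edges V"
    unfolding blue_matching_eq blue_edges_def by blast
  then show "blue_matching V b \<subseteq> hexagon_graph_edges V E idx"
    unfolding hexagon_graph_edges_def by blast
  fix x assume x: "x \<in> hex_vertices V"
  show "\<exists>!e. e \<in> blue_matching V b \<and> x \<in> e"
  proof (rule ex1I[of _ "{x, blue_mate b x}"])
    show "{x, blue_mate b x} \<in> blue_matching V b \<and> x \<in> {x, blue_mate b x}"
      using x by (simp add: blue_matching_def)
    fix e assume "e \<in> blue_matching V b \<and> x \<in> e"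
    then obtain y where "y \<in> hex_vertices V" "e = {y, blue_mate b y}" "x = y \<or> x = blue_mate b y"
      unfolding blue_matching_def by blast
    then show "e = {x, blue_mate b x}"
      using blue_mate_blue_mate[of y] by (metis insert_commute)
  qed
qed

text \<open>Every hexagon vertex lies on exactly two blue edges, so a blue perfect matching contains
  every second edge of each blue 6-cycle.\<close>
lemma blue_perfect_matching_alternates:
  assumes M: "blue_perfect_matching V E idx M" and v: "v \<in> V" and i: "Suc i < 6"
  shows "{(v, Suc i), (v, (Suc i + 1) mod 6)} \<in> M \<longleftrightarrow> {(v, i), (v, (i + 1) mod 6)} \<notin> M"
proof -
  let ?x = "(v, Suc i)"
  let ?e = "{(v, i), (v, (i + 1) mod 6)}" and ?e' = "{(v, Suc i), (v, (Suc i + 1) mod 6)}"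
  have x: "?x \<in> hex_vertices V"
    using v i by (simp add: hex_vertices_def)
  have "i \<noteq> (Suc i + 1) mod 6"
    using i by presburger
  then have "(v, i) \<notin> ?e'"
    by simp
  then have ne: "?e \<noteq> ?e'"
    by blast
  obtain e where e: "e \<in> M" "?x \<in> e" and unique: "\<And>e'. e' \<in> M \<Longrightarrow> ?x \<in> e' \<Longrightarrow> e' = e"
    using M x unfolding blue_perfect_matching_def by blast
  have "e = ?e \<or> e = ?e'"
  proof -
    obtain w j where wj: "e = {(w, j), (w, (j + 1) mod 6)}" "j < 6"
      using e(1) M unfolding blue_perfect_matching_def blue_edges_def by blast
    then have "v = w" "Suc i = j \<or> Suc i = (j + 1) mod 6"
      using e(2) by (simp_all only: insert_iff empty_iff prod.inject) blast+
    moreover have "Suc i = (j + 1) mod 6 \<Longrightarrow> j = i"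
      using wj(2) i by presburger
    ultimately have "w = v" "j = Suc i \<or> j = i"
      by auto
    then show ?thesis
      using wj(1) by (elim disjE) simp_all
  qed
  moreover have "?e \<in> M \<Longrightarrow> ?e = e" "?e' \<in> M \<Longrightarrow> ?e' = e"
    using unique i by simp_all
  ultimately show ?thesis
    using e(1) ne by metis
qed

lemma blue_perfect_matching_edge_iff:
  assumes M: "blue_perfect_matching V E idx M" and v: "v \<in> V" and i: "i < 6"
  shows "{(v, i), (v, (i + 1) mod 6)} \<in> M \<longleftrightarrow> (even i \<longleftrightarrow> {(v, 0), (v, 1)} \<in> M)"
  using i
proof (induction i)
  case (Suc i)
  then show ?case
    using blue_perfect_matching_alternates[OF M v Suc.prems] by auto
qed simp

lemma blue_perfect_matching_eq_blue_matching:
  assumes M: "blue_perfect_matching V E idx M"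
  shows "M = blue_matching V (\<lambda>v. {(v, 0), (v, 1)} \<in> M)"
  unfolding blue_matching_eq
proof (intro equalityI subsetI)
  fix e assume "e \<in> M"
  then obtain v i where "e = {(v, i), (v, (i + 1) mod 6)}" "v \<in> V" "i < 6"
    using M unfolding blue_perfect_matching_def blue_edges_def by blast
  then show "e \<in> {{(v, i), (v, (i + 1) mod 6)} | v i.
      v \<in> V \<and> i < 6 \<and> even i = ({(v, 0), (v, 1)} \<in> M)}"
    using blue_perfect_matching_edge_iff[OF M] \<open>e \<in> M\<close> by blast
next
  fix e assume "e \<in> {{(v, i), (v, (i + 1) mod 6)} | v (i :: nat).
      v \<in> V \<and> i < 6 \<and> even i = ({(v, 0), (v, 1)} \<in> M)}"
  then obtain v i where "e = {(v, i), (v, (i + 1) mod 6)}" "v \<in> V" "i < 6"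
    "even i = ({(v, 0), (v, 1)} \<in> M)"
    by blast
  then show "e \<in> M"
    using blue_perfect_matching_edge_iff[OF M] by blast
qed

section \<open>Blue perfect matchings and rotation systems\<close>

lemma blue_mate_hex_pos:
  assumes "i < 3"
  shows "blue_mate b (v, hex_pos i True) = (v, hex_pos ((i + (if b v then 1 else 2)) mod 3) False)"
proof -
  have "i = 0 \<or> i = 1 \<or> i = 2"
    using assms by auto
  then show ?thesis
    by (cases "b v"; elim disjE) (simp_all add: blue_mate_def hex_pos_def)
qed

locale oriented_cubic_graph = labelled_cubic_graph +
  fixes b :: "'a \<Rightarrow> bool"
begin

sublocale involution_pair "hex_vertices V" "blue_mate b" white_mate "\<lambda>x. even (snd x)"
proof
  show "finite (hex_vertices V)"
    using finite_V by (simp add: hex_vertices_def)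
  fix x assume x: "x \<in> hex_vertices V"
  show "blue_mate b x \<in> hex_vertices V" "white_mate x \<in> hex_vertices V"
    "blue_mate b (blue_mate b x) = x" "white_mate (white_mate x) = x"
    "even (snd (blue_mate b x)) \<longleftrightarrow> \<not> even (snd x)" "even (snd (white_mate x)) \<longleftrightarrow> \<not> even (snd x)"
    using x by (simp_all add: blue_mate_in white_mate_in blue_mate_blue_mate white_mate_white_mate
        even_blue_mate even_white_mate)
  show "blue_mate b x \<noteq> white_mate x"
    using fst_blue_mate[OF x] fst_white_mate[OF x] by metis
qed

lemma pair_edges_eq: "pair_edges = blue_matching V b \<union> white_edges E idx"
  by (simp add: pair_edges_def blue_matching_def white_edges_eq)

lemma blue_matching_disjoint_white_edges: "blue_matching V b \<inter> white_edges E idx = {}"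
  using \<sigma>_edges_disjoint_\<tau>_edges by (simp add: blue_matching_def white_edges_eq)

lemma \<phi>_dart_vertex:
  assumes "{u, v} \<in> E"
  shows "\<phi> (dart_vertex (u, v)) = dart_vertex (face_step (shift_rotation b) (u, v))"
proof -
  define k where "k = (idx v u + (if b v then 1 else 2)) mod 3"
  have "k < 3"
    by (simp add: k_def)
  have "blue_mate b (dart_vertex (u, v)) = (v, hex_pos k False)"
    unfolding dart_vertex_pair k_def by (rule blue_mate_hex_pos[OF idx_less[OF assms]])
  then have "\<phi> (dart_vertex (u, v)) = white_mate (v, hex_pos k False)"
    by (simp add: \<phi>_def)
  also have "\<dots> = dart_vertex (v, nbr_at v k)"
    using hex_pos[OF \<open>k < 3\<close>] by (simp add: white_mate_def Let_def dart_vertex_pair)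
  finally show ?thesis
    by (simp add: face_step_pair shift_rotation_def k_def)
qed

lemma funpow_\<phi>_dart_vertex:
  assumes "d \<in> darts E"
  shows "(\<phi> ^^ k) (dart_vertex d) = dart_vertex ((face_step (shift_rotation b) ^^ k) d)"
proof (induction k)
  case (Suc k)
  obtain u v where "(face_step (shift_rotation b) ^^ k) d = (u, v)" "{u, v} \<in> E"
    using funpow_face_step_in_darts[OF rotation_system_shift_rotation[of b] assms, of k]
    by (auto simp: darts_def)
  then show ?case
    using Suc \<phi>_dart_vertex by simp
qed simp

lemma dart_white_edge_in_orbit_cycle_iff:
  assumes d: "d \<in> darts E" and d': "d' \<in> darts E"
  shows "dart_white_edge d' \<in> orbit_cycle (dart_vertex d)
    \<longleftrightarrow> (\<exists>k. d' = (face_step (shift_rotation b) ^^ k) d)"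
proof
  have x: "dart_vertex d \<in> hex_vertices V" "even (snd (dart_vertex d))"
    using d dart_vertex_image by auto
  assume C: "dart_white_edge d' \<in> orbit_cycle (dart_vertex d)"
  have "dart_vertex d' \<in> dart_white_edge d'" "even (snd (dart_vertex d'))"
    using d' dart_vertex_image by (auto simp: dart_white_edge_def)
  then obtain k where "dart_vertex d' = (\<phi> ^^ k) (dart_vertex d)"
    using orbit_cycle_vertex[OF x C] by blast
  then have "dart_vertex d' = dart_vertex ((face_step (shift_rotation b) ^^ k) d)"
    using funpow_\<phi>_dart_vertex[OF d] by simp
  then have "d' = (face_step (shift_rotation b) ^^ k) d"
    by (rule inj_onD[OF inj_on_dart_vertex _ d' funpow_face_step_in_darts[OF rotation_system_shift_rotation d]])
  then show "\<exists>k. d' = (face_step (shift_rotation b) ^^ k) d" ..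
next
  assume "\<exists>k. d' = (face_step (shift_rotation b) ^^ k) d"
  then obtain k where "dart_white_edge d' = {(\<phi> ^^ k) (dart_vertex d), white_mate ((\<phi> ^^ k) (dart_vertex d))}"
    using funpow_\<phi>_dart_vertex[OF d] by (auto simp: dart_white_edge_def)
  moreover have "dart_vertex d \<in> hex_vertices V"
    using d dart_vertex_image by auto
  ultimately show "dart_white_edge d' \<in> orbit_cycle (dart_vertex d)"
    using funpow_\<phi>_\<tau>_edge_in_orbit_cycle by simp
qed

lemma induced_subgraph_orbit_cycle:
  assumes d: "d \<in> darts E"
  shows "induced_subgraph E idx (orbit_cycle (dart_vertex d)) = face_boundary (shift_rotation b) d"
proof (intro equalityI subsetI)
  let ?C = "orbit_cycle (dart_vertex d)" and ?f = "face_step (shift_rotation b)"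
  fix e
  assume "e \<in> induced_subgraph E idx ?C"
  then obtain u v where uv: "{u, v} \<in> E" "e = {u, v}"
    "white_e idx u v \<in> ?C \<or> white_ebar idx u v \<in> ?C"
    unfolding induced_subgraph_def by blast
  have darts: "(u, v) \<in> darts E" "(v, u) \<in> darts E"
    using uv(1) edge_sym by (simp_all add: darts_iff)
  have "{white_e idx u v, white_ebar idx u v} \<subseteq> {dart_white_edge (u, v), dart_white_edge (v, u)}"
    using white_e_white_ebar[OF uv(1)] by (rule equalityD1)
  then have "dart_white_edge (u, v) \<in> ?C \<or> dart_white_edge (v, u) \<in> ?C"
    using uv(3) by auto
  then obtain k where "(u, v) = (?f ^^ k) d \<or> (v, u) = (?f ^^ k) d"
    unfolding dart_white_edge_in_orbit_cycle_iff[OF d darts(1)]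
      dart_white_edge_in_orbit_cycle_iff[OF d darts(2)] by blast
  then have "e = {fst ((?f ^^ k) d), snd ((?f ^^ k) d)}"
  proof (elim disjE)
    assume "(u, v) = (?f ^^ k) d"
    from this[symmetric] show ?thesis
      using uv(2) by simp
  next
    assume "(v, u) = (?f ^^ k) d"
    from this[symmetric] show ?thesis
      using uv(2) by (simp add: insert_commute)
  qed
  then show "e \<in> face_boundary (shift_rotation b) d"
    unfolding face_boundary_def by blast
next
  let ?C = "orbit_cycle (dart_vertex d)" and ?f = "face_step (shift_rotation b)"
  fix e
  assume "e \<in> face_boundary (shift_rotation b) d"
  then obtain k where e: "e = {fst ((?f ^^ k) d), snd ((?f ^^ k) d)}"
    unfolding face_boundary_def by blast
  obtain u v where uv: "(?f ^^ k) d = (u, v)"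
    by fastforce
  have dart: "(u, v) \<in> darts E"
    using funpow_face_step_in_darts[OF rotation_system_shift_rotation[of b] d, of k] uv by simp
  then have E: "{u, v} \<in> E"
    by (simp add: darts_iff)
  have "dart_white_edge (u, v) \<in> ?C"
    using dart_white_edge_in_orbit_cycle_iff[OF d dart] uv by metis
  moreover have "dart_white_edge (u, v) \<in> {white_e idx u v, white_ebar idx u v}"
    using white_e_white_ebar[OF E] by simp
  ultimately have "white_e idx u v \<in> ?C \<or> white_ebar idx u v \<in> ?C"
    by auto
  moreover have "e = {u, v}"
    using e uv by simp
  ultimately show "e \<in> induced_subgraph E idx ?C"
    unfolding induced_subgraph_def using E by blast
qed

lemma face_boundaries_shift_rotation:
  "face_boundaries E (shift_rotation b)
    = induced_subgraph E idx ` cycles_of (blue_matching V b \<union> white_edges E idx)"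
proof -
  have "face_boundaries E (shift_rotation b)
      = (\<lambda>d. induced_subgraph E idx (orbit_cycle (dart_vertex d))) ` darts E"
    unfolding face_boundaries_def using induced_subgraph_orbit_cycle by (intro image_cong) auto
  also have "\<dots> = induced_subgraph E idx ` orbit_cycle ` dart_vertex ` darts E"
    by (simp add: image_image)
  also have "\<dots> = induced_subgraph E idx ` cycles_of pair_edges"
    by (simp add: cycles_of_pair_edges dart_vertex_image)
  finally show ?thesis
    by (simp add: pair_edges_eq)
qed

end

context labelled_cubic_graph
begin

lemma blue_perfect_matching_faces:
  assumes M: "blue_perfect_matching V E idx M"
  shows "M \<inter> white_edges E idx = {}"
    and "\<forall>C\<in>cycles_of (M \<union> white_edges E idx). is_cycle C"
    and "\<exists>\<rho>. rotation_system V E \<rho>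
           \<and> face_boundaries E \<rho> = induced_subgraph E idx ` cycles_of (M \<union> white_edges E idx)"
proof -
  define b where "b = (\<lambda>v. {(v, 0), (v, 1)} \<in> M)"
  interpret oriented_cubic_graph V E idx b ..
  have M_eq: "M = blue_matching V b"
    using blue_perfect_matching_eq_blue_matching[OF M] by (simp add: b_def)
  show "M \<inter> white_edges E idx = {}"
    using blue_matching_disjoint_white_edges M_eq by simp
  show "\<forall>C\<in>cycles_of (M \<union> white_edges E idx). is_cycle C"
    using is_cycle_orbit_cycle by (auto simp: M_eq pair_edges_eq[symmetric] cycles_of_pair_edges)
  show "\<exists>\<rho>. rotation_system V E \<rho>
           \<and> face_boundaries E \<rho> = induced_subgraph E idx ` cycles_of (M \<union> white_edges E idx)"
    using rotation_system_shift_rotation face_boundaries_shift_rotation M_eq by blast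
qed

lemma rotation_system_faces:
  assumes r: "rotation_system V E r"
  shows "\<exists>M. blue_perfect_matching V E idx M
           \<and> face_boundaries E r = induced_subgraph E idx ` cycles_of (M \<union> white_edges E idx)"
proof -
  define b where "b = (\<lambda>v. idx v (r v (nbr_at v 0)) = 1)"
  interpret oriented_cubic_graph V E idx b ..
  have "face_boundaries E r = face_boundaries E (shift_rotation b)"
    using face_boundaries_cong[OF r] rotation_system_eq_shift_rotation[OF r] unfolding b_def by blast
  then show ?thesis
    using blue_perfect_matching_blue_matching face_boundaries_shift_rotation by blast
qed

end

theorem mainTheorem1:
  fixes V :: "'a set" and E :: "'a set set" and idx :: "'a \<Rightarrow> 'a \<Rightarrow> nat"
  assumes "cubic_graph V E"
    and "hexagon_labelling V E idx"
  shows "(\<forall>M. blue_perfect_matching V E idx M \<longrightarrow>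
            M \<inter> white_edges E idx = {}
          \<and> (\<forall>C\<in>cycles_of (M \<union> white_edges E idx). is_cycle C)
          \<and> (\<exists>\<rho>. rotation_system V E \<rho> \<and>
               face_boundaries E \<rho> = induced_subgraph E idx ` cycles_of (M \<union> white_edges E idx)))
       \<and> (\<forall>\<rho>. rotation_system V E \<rho> \<longrightarrow>
            (\<exists>M. blue_perfect_matching V E idx M \<and>
               face_boundaries E \<rho> = induced_subgraph E idx ` cycles_of (M \<union> white_edges E idx)))"
proof -
  interpret labelled_cubic_graph V E idx
    using assms by unfold_locales
  show ?thesis
    using blue_perfect_matching_faces rotation_system_faces by blast
qed

end
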